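(* Let $k\ge 2$ be an integer, let $(G,\sigma)$ be a signed graph, and let $\beta$ be a $\mathbb{Z}_{4k}$-pc-boundary of $2G$ such that $\beta(v)\equiv 2k\cdot p^+(v)\pmod{4k}$ for every $v\in V(G)$. If $2G$ admits a strongly connected $(4k,\beta)$-orientation, then $\phi_c(G,\sigma)<\frac{2k}{k-1}$.
   Context: Graphs may have parallel edges but no loops. A signed graph $(G,\sigma)$ has $\sigma:E(G)\to\{+1,-1\}$; $p^+(v)$ is the number of positive edges incident with $v$. $2G$ is obtained from $G$ by replacing every edge with two parallel edges. For a graph $H$ and a positive integer $m$, a $\mathbb{Z}_{2m}$-pc-boundary of $H$ is a map $\beta:V(H)\to\{0,\pm1,\dots,\pm m\}$ with $\beta(v)\equiv d_H(v)\pmod 2$ for all $v$ and $\sum_v\beta(v)\equiv0\pmod{2m}$; a $(2m,\beta)$-orientation is an orientation $D$ of $H$ with $d^+_D(v)-d^-_D(v)\equiv\beta(v)\pmod{2m}$ for all $v$. An orientation $D$ is strongly connected if $d^+_D(S)>0$ and $d^-_D(S)>0$ for every nonempty proper subset $S\subset V(H)$. For positive integers $p,q$ with $p$ even, a circular $\frac pq$-flow of $(G,\sigma)$ is a pair $(D,f)$ with $D$ an orientation of $G$ and $f:E(G)\to\mathbb{Z}$ such that $|f(e)|\in\{q,\dots,p-q\}$ for every positive edge, $|f(e)|\in\{0,\dots,\frac p2-q\}\cup\{\frac p2+q,\dots,p-1\}$ for every negative edge, and $\sum_{(v,w)\in D}f(vw)-\sum_{(u,v)\in D}f(uv)\equiv0\pmod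 p$ for every vertex $v$. The circular flow index $\phi_c(G,\sigma)$ is the minimum of $\frac pq$ over all circular $\frac pq$-flows of $(G,\sigma)$. *)

theory Defs
  imports Complex_Main
begin

text \<open>Parallel edges are distinct elements of E with the same ends.\<close>

definition loopless_graph :: "'v set \<Rightarrow> 'e set \<Rightarrow> ('e \<Rightarrow> 'v \<times> 'v) \<Rightarrow> bool" where
  "loopless_graph V E ends \<longleftrightarrow> finite V \<and> finite E \<and>
     (\<forall>e\<in>E. fst (ends e) \<in> V \<and> snd (ends e) \<in> V \<and> fst (ends e) \<noteq> snd (ends e))"

definition incident :: "('e \<Rightarrow> 'v \<times> 'v) \<Rightarrow> 'e \<Rightarrow> 'v \<Rightarrow> bool" where
  "incident ends e v \<longleftrightarrow> fst (ends e) = v \<or> snd (ends e) = v"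

definition degree :: "'e set \<Rightarrow> ('e \<Rightarrow> 'v \<times> 'v) \<Rightarrow> 'v \<Rightarrow> nat" where
  "degree E ends v = card {e\<in>E. incident ends e v}"

text \<open>The doubled graph 2G: every edge e is replaced by the two parallel edges (e,False), (e,True).\<close>

definition double_edges :: "'e set \<Rightarrow> ('e \<times> bool) set" where
  "double_edges E = E \<times> UNIV"

definition double_ends :: "('e \<Rightarrow> 'v \<times> 'v) \<Rightarrow> ('e \<times> bool) \<Rightarrow> 'v \<times> 'v" where
  "double_ends ends x = ends (fst x)"

text \<open>Signed graphs: sigma e = True means e is positive (sign +1), False means negative (-1).\<close>

definition pos_degree :: "'e set \<Rightarrow> ('e \<Rightarrow> 'v \<times> 'v) \<Rightarrow> ('e \<Rightarrow> bool) \<Rightarrow> 'v \<Rightarrow> nat" where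
  "pos_degree E ends sigma v = card {e\<in>E. sigma e \<and> incident ends e v}"

definition tail :: "('e \<Rightarrow> 'v \<times> 'v) \<Rightarrow> ('e \<Rightarrow> bool) \<Rightarrow> 'e \<Rightarrow> 'v" where
  "tail ends D e = (if D e then fst (ends e) else snd (ends e))"

definition head :: "('e \<Rightarrow> 'v \<times> 'v) \<Rightarrow> ('e \<Rightarrow> bool) \<Rightarrow> 'e \<Rightarrow> 'v" where
  "head ends D e = (if D e then snd (ends e) else fst (ends e))"

definition outdeg :: "'e set \<Rightarrow> ('e \<Rightarrow> 'v \<times> 'v) \<Rightarrow> ('e \<Rightarrow> bool) \<Rightarrow> 'v \<Rightarrow> nat" where
  "outdeg E ends D v = card {e\<in>E. tail ends D e = v}"

definition indeg :: "'e set \<Rightarrow> ('e \<Rightarrow> 'v \<times> 'v) \<Rightarrow> ('e \<Rightarrow> bool) \<Rightarrow> 'v \<Rightarrow> nat" where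
  "indeg E ends D v = card {e\<in>E. head ends D e = v}"

definition outdeg_set :: "'e set \<Rightarrow> ('e \<Rightarrow> 'v \<times> 'v) \<Rightarrow> ('e \<Rightarrow> bool) \<Rightarrow> 'v set \<Rightarrow> nat" where
  "outdeg_set E ends D S = card {e\<in>E. tail ends D e \<in> S \<and> head ends D e \<notin> S}"

definition indeg_set :: "'e set \<Rightarrow> ('e \<Rightarrow> 'v \<times> 'v) \<Rightarrow> ('e \<Rightarrow> bool) \<Rightarrow> 'v set \<Rightarrow> nat" where
  "indeg_set E ends D S = card {e\<in>E. tail ends D e \<notin> S \<and> head ends D e \<in> S}"

definition strongly_connected_orientation ::
  "'v set \<Rightarrow> 'e set \<Rightarrow> ('e \<Rightarrow> 'v \<times> 'v) \<Rightarrow> ('e \<Rightarrow> bool) \<Rightarrow> bool" where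
  "strongly_connected_orientation V E ends D \<longleftrightarrow>
     (\<forall>S. S \<noteq> {} \<and> S \<subset> V \<longrightarrow> outdeg_set E ends D S > 0 \<and> indeg_set E ends D S > 0)"

definition pc_boundary :: "nat \<Rightarrow> 'v set \<Rightarrow> 'e set \<Rightarrow> ('e \<Rightarrow> 'v \<times> 'v) \<Rightarrow> ('v \<Rightarrow> int) \<Rightarrow> bool" where
  "pc_boundary m V E ends beta \<longleftrightarrow>
     (\<forall>v\<in>V. \<bar>beta v\<bar> \<le> int m \<and> beta v mod 2 = int (degree E ends v) mod 2) \<and>
     (\<Sum>v\<in>V. beta v) mod (2 * int m) = 0"

text \<open>(2m,beta)-orientation (the modulus N stands for 2m).\<close>

definition beta_orientation :: "nat \<Rightarrow> 'v set \<Rightarrow> 'e set \<Rightarrow> ('e \<Rightarrow> 'v \<times> 'v) \<Rightarrow> ('v \<Rightarrow> int) \<Rightarrow> ('e \<Rightarrow> bool) \<Rightarrow> bool" where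
  "beta_orientation N V E ends beta D \<longleftrightarrow>
     (\<forall>v\<in>V. (int (outdeg E ends D v) - int (indeg E ends D v)) mod int N = beta v mod int N)"

definition circular_flow ::
  "nat \<Rightarrow> nat \<Rightarrow> 'v set \<Rightarrow> 'e set \<Rightarrow> ('e \<Rightarrow> 'v \<times> 'v) \<Rightarrow> ('e \<Rightarrow> bool) \<Rightarrow> ('e \<Rightarrow> bool) \<Rightarrow> ('e \<Rightarrow> int) \<Rightarrow> bool" where
  "circular_flow p q V E ends sigma D f \<longleftrightarrow>
     (\<forall>e\<in>E. sigma e \<longrightarrow> \<bar>f e\<bar> \<in> {int q .. int p - int q}) \<and>
     (\<forall>e\<in>E. \<not> sigma e \<longrightarrow>
        \<bar>f e\<bar> \<in> {0 .. int p div 2 - int q} \<union> {int p div 2 + int q .. int p - 1}) \<and>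
     (\<forall>v\<in>V. ((\<Sum>e\<in>{e\<in>E. tail ends D e = v}. f e) - (\<Sum>e\<in>{e\<in>E. head ends D e = v}. f e))
              mod int p = 0)"

definition circular_flow_index :: "'v set \<Rightarrow> 'e set \<Rightarrow> ('e \<Rightarrow> 'v \<times> 'v) \<Rightarrow> ('e \<Rightarrow> bool) \<Rightarrow> real" where
  "circular_flow_index V E ends sigma =
     Inf {real p / real q | p q. p > 0 \<and> q > 0 \<and> even p \<and>
                                 (\<exists>D f. circular_flow p q V E ends sigma D f)}"

end

theory Submission
  imports Defs
begin

text \<open>A strongly connected orientation D of 2G carries an integer circulation c \<ge> 1. For
  N > max c, the values N - c on the arcs of D form an integer flow with values in [1, N - 1]
  and boundary N (d^+ - d^-). Merging the two copies of each edge gives g on G with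
  |g| \<le> 2N - 2 and, by the hypothesis on \<beta>, boundary congruent to 2kN p^+(v) modulo 4kN.
  Adding 2kN on every positive edge makes the boundary vanish modulo 4kN and yields a circular
  4kN/(2(k-1)N + 2)-flow, and this ratio is smaller than 2k/(k-1).\<close>

inductive walk :: "'a set \<Rightarrow> ('a \<Rightarrow> 'v) \<Rightarrow> ('a \<Rightarrow> 'v) \<Rightarrow> 'v \<Rightarrow> 'a list \<Rightarrow> 'v \<Rightarrow> bool"
  for A src tgt where
  walk_Nil: "walk A src tgt x [] x"
| walk_Cons: "a \<in> A \<Longrightarrow> src a = x \<Longrightarrow> walk A src tgt (tgt a) xs y \<Longrightarrow> walk A src tgt x (a # xs) y"

lemma walk_snoc:
  "walk A src tgt x xs y \<Longrightarrow> a \<in> A \<Longrightarrow> src a = y \<Longrightarrow> walk A src tgt x (xs @ [a]) (tgt a)"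
  by (induction rule: walk.induct) (auto intro: walk.intros)

lemma walk_subset: "walk A src tgt x xs y \<Longrightarrow> set xs \<subseteq> A"
  by (induction rule: walk.induct) auto

lemma walk_count_tails_heads:
  "walk A src tgt x xs y \<Longrightarrow>
   int (length (filter (\<lambda>a. src a = v) xs)) + (if v = y then 1 else 0)
   = int (length (filter (\<lambda>a. tgt a = v) xs)) + (if v = x then 1 else 0)"
  by (induction rule: walk.induct) auto

lemma closed_walk_count_tails_heads:
  "walk A src tgt x xs x \<Longrightarrow> length (filter (\<lambda>a. src a = v) xs) = length (filter (\<lambda>a. tgt a = v) xs)"
  using walk_count_tails_heads[of A src tgt x xs x v] by simp

lemma walk_exists_if_cuts_nonempty:
  assumes arcs: "\<forall>a\<in>A. src a \<in> V \<and> tgt a \<in> V"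
    and cuts: "\<forall>S. S \<noteq> {} \<and> S \<subset> V \<longrightarrow> (\<exists>a\<in>A. src a \<in> S \<and> tgt a \<notin> S)"
    and "x \<in> V" "y \<in> V"
  shows "\<exists>xs. walk A src tgt x xs y"
proof (rule ccontr)
  assume no_walk: "\<nexists>xs. walk A src tgt x xs y"
  define S where "S = {z\<in>V. \<exists>xs. walk A src tgt x xs z}"
  have "x \<in> S" using \<open>x \<in> V\<close> walk_Nil unfolding S_def by fast
  moreover have "y \<notin> S" using no_walk unfolding S_def by blast
  moreover have "S \<subseteq> V" unfolding S_def by blast
  ultimately have "S \<noteq> {} \<and> S \<subset> V" using \<open>y \<in> V\<close> by blast
  then obtain a where a: "a \<in> A" "src a \<in> S" "tgt a \<notin> S"
    using cuts by blast
  then obtain xs where "walk A src tgt x xs (src a)" unfolding S_def by blast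
  then have "walk A src tgt x (xs @ [a]) (tgt a)" using a(1) by (rule walk_snoc) simp
  with a(1,3) arcs show False unfolding S_def by blast
qed

lemma sum_count_list_filter:
  assumes "set xs \<subseteq> A" "finite A"
  shows "(\<Sum>a\<in>{a\<in>A. P a}. count_list xs a) = length (filter P xs)"
  using assms(1)
proof (induction xs)
  case Nil
  then show ?case by simp
next
  case (Cons b xs)
  have "(\<Sum>a\<in>{a\<in>A. P a}. count_list (b # xs) a)
      = (\<Sum>a\<in>{a\<in>A. P a}. count_list xs a + (if b = a then 1 else 0))"
    by (rule sum.cong) auto
  also have "\<dots> = (\<Sum>a\<in>{a\<in>A. P a}. count_list xs a) + (\<Sum>a\<in>{a\<in>A. P a}. if b = a then 1 else 0)"
    by (rule sum.distrib)
  also have "(\<Sum>a\<in>{a\<in>A. P a}. if b = a then 1 else 0) = (if P b then 1 else (0::nat))"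
    using Cons.prems assms(2) by (simp add: sum.delta)
  finally show ?case using Cons by simp
qed

text \<open>Summing the closed walks that return from the head of each arc to its tail gives
  a circulation through every arc.\<close>

lemma positive_circulation_exists:
  assumes "finite A"
    and arcs: "\<forall>a\<in>A. src a \<in> V \<and> tgt a \<in> V"
    and cuts: "\<forall>S. S \<noteq> {} \<and> S \<subset> V \<longrightarrow> (\<exists>a\<in>A. src a \<in> S \<and> tgt a \<notin> S)"
  shows "\<exists>c::'a \<Rightarrow> int. (\<forall>a\<in>A. 1 \<le> c a) \<and>
           (\<forall>v. (\<Sum>a\<in>{a\<in>A. src a = v}. c a) = (\<Sum>a\<in>{a\<in>A. tgt a = v}. c a))"
proof -
  have "\<forall>a\<in>A. \<exists>xs. walk A src tgt (tgt a) xs (src a)"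
    using walk_exists_if_cuts_nonempty[OF arcs cuts] arcs by blast
  then obtain W where W: "\<And>a. a \<in> A \<Longrightarrow> walk A src tgt (tgt a) (W a) (src a)"
    by metis
  then have closed: "walk A src tgt (src a) (a # W a) (src a)" if "a \<in> A" for a
    using that by (blast intro: walk_Cons)
  define c where "c b = int (\<Sum>a\<in>A. count_list (a # W a) b)" for b
  have "1 \<le> c a" if "a \<in> A" for a
  proof -
    have "1 \<le> count_list (a # W a) a" by simp
    also have "\<dots> \<le> (\<Sum>a'\<in>A. count_list (a' # W a') a)"
      using that \<open>finite A\<close> by (intro member_le_sum) auto
    finally show ?thesis unfolding c_def by linarith
  qed
  moreover have "(\<Sum>b\<in>{b\<in>A. src b = v}. c b) = (\<Sum>b\<in>{b\<in>A. tgt b = v}. c b)" for v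
  proof -
    have sum_c: "(\<Sum>b\<in>{b\<in>A. P b}. c b) = int (\<Sum>a\<in>A. length (filter P (a # W a)))" for P
    proof -
      have "(\<Sum>b\<in>{b\<in>A. P b}. \<Sum>a\<in>A. count_list (a # W a) b)
          = (\<Sum>a\<in>A. \<Sum>b\<in>{b\<in>A. P b}. count_list (a # W a) b)"
        by (rule sum.swap)
      also have "\<dots> = (\<Sum>a\<in>A. length (filter P (a # W a)))"
        using walk_subset[OF closed] \<open>finite A\<close> by (intro sum.cong refl sum_count_list_filter)
      finally have "(\<Sum>b\<in>{b\<in>A. P b}. \<Sum>a\<in>A. count_list (a # W a) b)
          = (\<Sum>a\<in>A. length (filter P (a # W a)))" .
      then show ?thesis unfolding c_def by (simp only: of_nat_sum[symmetric])
    qed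
    have "(\<Sum>a\<in>A. length (filter (\<lambda>b. src b = v) (a # W a)))
        = (\<Sum>a\<in>A. length (filter (\<lambda>b. tgt b = v) (a # W a)))"
      by (rule sum.cong[OF refl]) (rule closed_walk_count_tails_heads[OF closed])
    then show ?thesis unfolding sum_c by simp
  qed
  ultimately show ?thesis by (intro exI[of _ c]) blast
qed

definition net_flow :: "'e set \<Rightarrow> ('e \<Rightarrow> 'v \<times> 'v) \<Rightarrow> ('e \<Rightarrow> int) \<Rightarrow> 'v \<Rightarrow> int" where
  "net_flow E ends f v =
     (\<Sum>e\<in>{e\<in>E. fst (ends e) = v}. f e) - (\<Sum>e\<in>{e\<in>E. snd (ends e) = v}. f e)"

lemma net_flow_add: "net_flow E ends (\<lambda>e. f e + g e) v = net_flow E ends f v + net_flow E ends g v"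
  unfolding net_flow_def by (simp add: sum.distrib)

lemma net_flow_eq_sum:
  "finite E \<Longrightarrow> net_flow E ends f v =
     (\<Sum>e\<in>E. (if fst (ends e) = v then f e else 0) - (if snd (ends e) = v then f e else 0))"
  unfolding net_flow_def by (simp add: sum.inter_filter sum_subtractf)

lemma net_flow_orient:
  assumes "finite E"
  shows "net_flow E ends (\<lambda>e. if D e then w e else - w e) v
       = (\<Sum>e\<in>{e\<in>E. tail ends D e = v}. w e) - (\<Sum>e\<in>{e\<in>E. head ends D e = v}. w e)"
proof -
  have "(\<Sum>e\<in>{e\<in>E. tail ends D e = v}. w e) - (\<Sum>e\<in>{e\<in>E. head ends D e = v}. w e)
      = (\<Sum>e\<in>E. (if tail ends D e = v then w e else 0) - (if head ends D e = v then w e else 0))"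
    using assms by (simp add: sum.inter_filter sum_subtractf)
  then show ?thesis
    unfolding net_flow_eq_sum[OF assms] by (auto simp: tail_def head_def intro: sum.cong)
qed

lemma net_flow_double_edges:
  assumes "finite E"
  shows "net_flow (double_edges E) (double_ends ends) f v
       = net_flow E ends (\<lambda>e. f (e, False) + f (e, True)) v"
proof -
  define F where "F x = (if fst (ends (fst x)) = v then f x else 0) - (if snd (ends (fst x)) = v then f x else 0)"
    for x
  have "net_flow (double_edges E) (double_ends ends) f v = (\<Sum>x\<in>E \<times> UNIV. F x)"
    using assms by (simp add: net_flow_eq_sum double_edges_def double_ends_def F_def)
  also have "\<dots> = (\<Sum>e\<in>E. \<Sum>b\<in>UNIV. F (e, b))"
    by (simp add: sum.cartesian_product)
  also have "\<dots> = (\<Sum>e\<in>E. F (e, False) + F (e, True))"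
    by (simp add: UNIV_bool)
  also have "\<dots> = net_flow E ends (\<lambda>e. f (e, False) + f (e, True)) v"
    unfolding net_flow_eq_sum[OF assms] F_def by (rule sum.cong) auto
  finally show ?thesis .
qed

lemma loopless_graph_double:
  "loopless_graph V E ends \<Longrightarrow> loopless_graph V (double_edges E) (double_ends ends)"
  by (auto simp: loopless_graph_def double_edges_def double_ends_def)

lemma net_flow_indicator_mod:
  fixes c :: int
  assumes "loopless_graph V E ends"
  shows "net_flow E ends (\<lambda>e. if sigma e then c else 0) v mod (2 * c)
       = c * int (pos_degree E ends sigma v) mod (2 * c)"
proof -
  have "finite E" using assms by (simp add: loopless_graph_def)
  have sum_indicator: "(\<Sum>e\<in>{e\<in>E. P e}. if sigma e then c else 0) = c * int (card {e\<in>E. sigma e \<and> P e})"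
    for P
  proof -
    have "(\<Sum>e\<in>{e\<in>E. P e}. if sigma e then c else 0) = (\<Sum>e\<in>{e\<in>{e\<in>E. P e}. sigma e}. c)"
      using \<open>finite E\<close> by (intro sum.inter_filter[symmetric]) simp
    also have "{e\<in>{e\<in>E. P e}. sigma e} = {e\<in>E. sigma e \<and> P e}" by auto
    finally show ?thesis by simp
  qed
  define a where "a = card {e\<in>E. sigma e \<and> fst (ends e) = v}"
  define b where "b = card {e\<in>E. sigma e \<and> snd (ends e) = v}"
  have "pos_degree E ends sigma v = a + b"
  proof -
    have "{e\<in>E. sigma e \<and> incident ends e v}
        = {e\<in>E. sigma e \<and> fst (ends e) = v} \<union> {e\<in>E. sigma e \<and> snd (ends e) = v}"
      by (auto simp: incident_def)
    moreover have "{e\<in>E. sigma e \<and> fst (ends e) = v} \<inter> {e\<in>E. sigma e \<and> snd (ends e) = v} = {}"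
      using assms by (fastforce simp: loopless_graph_def)
    ultimately show ?thesis
      using \<open>finite E\<close> by (simp add: pos_degree_def a_def b_def card_Un_disjoint)
  qed
  moreover have "net_flow E ends (\<lambda>e. if sigma e then c else 0) v = c * int (a + b) + (- int b) * (2 * c)"
    unfolding net_flow_def sum_indicator a_def b_def by (simp add: algebra_simps)
  ultimately show ?thesis by (simp only: mod_mult_self1)
qed

lemma strongly_connected_orientation_circulation:
  fixes E :: "'e set"
  assumes H: "loopless_graph V E ends" and SC: "strongly_connected_orientation V E ends D"
  shows "\<exists>c::'e \<Rightarrow> int. (\<forall>e\<in>E. 1 \<le> c e) \<and>
           (\<forall>v. (\<Sum>e\<in>{e\<in>E. tail ends D e = v}. c e) = (\<Sum>e\<in>{e\<in>E. head ends D e = v}. c e))"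
proof (rule positive_circulation_exists)
  show "finite E" "\<forall>e\<in>E. tail ends D e \<in> V \<and> head ends D e \<in> V"
    using H by (auto simp: loopless_graph_def tail_def head_def)
  show "\<forall>S. S \<noteq> {} \<and> S \<subset> V \<longrightarrow> (\<exists>e\<in>E. tail ends D e \<in> S \<and> head ends D e \<notin> S)"
  proof (intro allI impI)
    fix S assume "S \<noteq> {} \<and> S \<subset> V"
    then have "outdeg_set E ends D S > 0"
      using SC by (simp add: strongly_connected_orientation_def)
    then show "\<exists>e\<in>E. tail ends D e \<in> S \<and> head ends D e \<notin> S"
      by (auto simp: outdeg_set_def card_gt_0_iff)
  qed
qed

lemma strongly_connected_orientation_flow:
  fixes E :: "'e set"
  assumes H: "loopless_graph V E ends" and SC: "strongly_connected_orientation V E ends D"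
  shows "\<exists>N::nat. 0 < N \<and> (\<exists>\<phi>. (\<forall>e\<in>E. \<bar>\<phi> e\<bar> \<le> int N - 1) \<and>
           (\<forall>v. net_flow E ends \<phi> v = int N * (int (outdeg E ends D v) - int (indeg E ends D v))))"
proof -
  have "finite E" using H by (simp add: loopless_graph_def)
  obtain c :: "'e \<Rightarrow> int" where c_pos: "\<forall>e\<in>E. 1 \<le> c e"
    and c_circ: "\<forall>v. (\<Sum>e\<in>{e\<in>E. tail ends D e = v}. c e) = (\<Sum>e\<in>{e\<in>E. head ends D e = v}. c e)"
    using strongly_connected_orientation_circulation[OF H SC] by blast
  define N where "N = nat (Max (insert 0 (c ` E))) + 1"
  have c_le: "c e \<le> int N - 1" if "e \<in> E" for e
  proof -
    have "c e \<le> Max (insert 0 (c ` E))" "0 \<le> Max (insert 0 (c ` E))"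
      using that \<open>finite E\<close> by (auto intro: Max_ge)
    then show ?thesis by (simp add: N_def)
  qed
  define w where "w e = int N - c e" for e
  define \<phi> where "\<phi> e = (if D e then w e else - w e)" for e
  have "\<bar>\<phi> e\<bar> \<le> int N - 1" if "e \<in> E" for e
  proof -
    have "1 \<le> c e" "c e \<le> int N - 1" using c_pos c_le that by auto
    then show ?thesis unfolding \<phi>_def w_def by (simp add: abs_if)
  qed
  moreover have "net_flow E ends \<phi> v = int N * (int (outdeg E ends D v) - int (indeg E ends D v))" for v
  proof -
    have sum_w: "(\<Sum>e\<in>{e\<in>E. P e}. w e) = int N * int (card {e\<in>E. P e}) - (\<Sum>e\<in>{e\<in>E. P e}. c e)" for P
      by (simp add: w_def sum_subtractf)
    show ?thesis
      unfolding \<phi>_def net_flow_orient[OF \<open>finite E\<close>] sum_w outdeg_def indeg_def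
      using c_circ by (simp add: algebra_simps)
  qed
  ultimately show ?thesis by (intro exI[of _ N] conjI exI[of _ \<phi>]) (auto simp: N_def)
qed

lemma double_orientation_merged_flow:
  assumes H: "loopless_graph V E ends"
    and SC: "strongly_connected_orientation V (double_edges E) (double_ends ends) D"
  shows "\<exists>N::nat. 0 < N \<and> (\<exists>g. (\<forall>e\<in>E. \<bar>g e\<bar> \<le> 2 * int N - 2) \<and>
           (\<forall>v. net_flow E ends g v = int N * (int (outdeg (double_edges E) (double_ends ends) D v)
                                              - int (indeg (double_edges E) (double_ends ends) D v))))"
proof -
  obtain N \<phi> where "0 < N" and \<phi>_bound: "\<forall>x\<in>double_edges E. \<bar>\<phi> x\<bar> \<le> int N - 1"
    and \<phi>_flow: "\<forall>v. net_flow (double_edges E) (double_ends ends) \<phi> v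
        = int N * (int (outdeg (double_edges E) (double_ends ends) D v)
                   - int (indeg (double_edges E) (double_ends ends) D v))"
    using strongly_connected_orientation_flow[OF loopless_graph_double[OF H] SC] by blast
  have "finite E" using H by (simp add: loopless_graph_def)
  define g where "g e = \<phi> (e, False) + \<phi> (e, True)" for e
  have "\<bar>g e\<bar> \<le> 2 * int N - 2" if "e \<in> E" for e
  proof -
    have "\<bar>\<phi> (e, False)\<bar> \<le> int N - 1" "\<bar>\<phi> (e, True)\<bar> \<le> int N - 1"
      using \<phi>_bound that by (auto simp: double_edges_def)
    then show ?thesis unfolding g_def by arith
  qed
  moreover have "net_flow E ends g v = net_flow (double_edges E) (double_ends ends) \<phi> v" for v
    unfolding g_def net_flow_double_edges[OF \<open>finite E\<close>] ..
  ultimately show ?thesis using \<open>0 < N\<close> \<phi>_flow by (intro exI[of _ N] conjI exI[of _ g]) auto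
qed

lemma circular_flow_shift_positive_edges:
  assumes H: "loopless_graph V E ends"
    and bound: "\<forall>e\<in>E. \<bar>g e\<bar> \<le> int M - int q"
    and boundary: "\<forall>v\<in>V. net_flow E ends g v mod (2 * int M)
                            = int M * int (pos_degree E ends sigma v) mod (2 * int M)"
  shows "circular_flow (2 * M) q V E ends sigma (\<lambda>_. True) (\<lambda>e. g e + (if sigma e then int M else 0))"
proof -
  define f where "f e = g e + (if sigma e then int M else 0)" for e
  have "\<bar>f e\<bar> \<in> {int q .. int (2 * M) - int q}" if "e \<in> E" "sigma e" for e
    using bound that by (auto simp: f_def abs_le_iff)
  moreover have "\<bar>f e\<bar> \<in> {0 .. int (2 * M) div 2 - int q} \<union> {int (2 * M) div 2 + int q .. int (2 * M) - 1}"
    if "e \<in> E" "\<not> sigma e" for e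
    using bound that by (simp add: f_def)
  moreover have "((\<Sum>e\<in>{e\<in>E. tail ends (\<lambda>_. True) e = v}. f e)
                - (\<Sum>e\<in>{e\<in>E. head ends (\<lambda>_. True) e = v}. f e)) mod int (2 * M) = 0"
    if "v \<in> V" for v
  proof -
    have "net_flow E ends f v mod (2 * int M)
        = (int M * int (pos_degree E ends sigma v) + int M * int (pos_degree E ends sigma v)) mod (2 * int M)"
      unfolding f_def net_flow_add
      using boundary that net_flow_indicator_mod[OF H] by (intro mod_add_cong) auto
    also have "\<dots> = 0" by simp
    finally show ?thesis by (simp add: net_flow_def tail_def head_def)
  qed
  ultimately show ?thesis unfolding circular_flow_def f_def by blast
qed

lemma beta_orientation_scaled_mod:
  assumes "beta_orientation m V E ends beta D" "v \<in> V" "beta v mod int m = b mod int m"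
  shows "c * (int (outdeg E ends D v) - int (indeg E ends D v)) mod (c * int m) = c * b mod (c * int m)"
  using assms by (simp add: beta_orientation_def mod_mult_mult1)

lemma beta_orientation_circular_flow:
  assumes "1 \<le> k"
    and H: "loopless_graph V E ends"
    and beta: "\<forall>v\<in>V. beta v mod (4 * int k) = (2 * int k * int (pos_degree E ends sigma v)) mod (4 * int k)"
    and SC: "strongly_connected_orientation V (double_edges E) (double_ends ends) D"
    and BO: "beta_orientation (4 * k) V (double_edges E) (double_ends ends) beta D"
  shows "\<exists>N>0. \<exists>f. circular_flow (4 * k * N) (2 * (k - 1) * N + 2) V E ends sigma (\<lambda>_. True) f"
proof -
  obtain N g where "0 < N" and g_bound: "\<forall>e\<in>E. \<bar>g e\<bar> \<le> 2 * int N - 2"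
    and g_flow: "\<forall>v. net_flow E ends g v = int N * (int (outdeg (double_edges E) (double_ends ends) D v)
                                                - int (indeg (double_edges E) (double_ends ends) D v))"
    using double_orientation_merged_flow[OF H SC] by blast
  define M where "M = 2 * k * N"
  define q where "q = 2 * (k - 1) * N + 2"
  have "int q = 2 * (int k - 1) * int N + 2"
    using \<open>1 \<le> k\<close> by (simp add: q_def of_nat_diff)
  then have "int M - int q = 2 * int N - 2"
    by (simp add: M_def algebra_simps)
  with g_bound have "\<forall>e\<in>E. \<bar>g e\<bar> \<le> int M - int q" by simp
  moreover have "\<forall>v\<in>V. net_flow E ends g v mod (2 * int M)
                      = int M * int (pos_degree E ends sigma v) mod (2 * int M)"
  proof
    fix v assume "v \<in> V"
    have "int N * (int (outdeg (double_edges E) (double_ends ends) D v)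
                   - int (indeg (double_edges E) (double_ends ends) D v)) mod (int N * int (4 * k))
        = int N * (2 * int k * int (pos_degree E ends sigma v)) mod (int N * int (4 * k))"
      by (rule beta_orientation_scaled_mod[OF BO \<open>v \<in> V\<close>]) (use beta \<open>v \<in> V\<close> in simp)
    moreover have "2 * int M = int N * int (4 * k)"
      "int M * int (pos_degree E ends sigma v) = int N * (2 * int k * int (pos_degree E ends sigma v))"
      by (simp_all add: M_def)
    ultimately show "net_flow E ends g v mod (2 * int M)
                   = int M * int (pos_degree E ends sigma v) mod (2 * int M)"
      by (simp only: g_flow)
  qed
  ultimately have "circular_flow (2 * M) q V E ends sigma (\<lambda>_. True) (\<lambda>e. g e + (if sigma e then int M else 0))"
    by (rule circular_flow_shift_positive_edges[OF H])
  moreover have "2 * M = 4 * k * N" by (simp add: M_def)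
  ultimately show ?thesis using \<open>0 < N\<close> unfolding q_def by auto
qed

lemma circular_flow_index_le:
  assumes "circular_flow p q V E ends sigma D f" "0 < p" "0 < q" "even p"
  shows "circular_flow_index V E ends sigma \<le> real p / real q"
  unfolding circular_flow_index_def
proof (rule cInf_lower)
  show "real p / real q \<in> {real p / real q | p q. p > 0 \<and> q > 0 \<and> even p \<and>
                              (\<exists>D f. circular_flow p q V E ends sigma D f)}"
    using assms by blast
  show "bdd_below {real p / real q | p q. p > 0 \<and> q > 0 \<and> even p \<and>
                     (\<exists>D f. circular_flow p q V E ends sigma D f)}"
    by (rule bdd_belowI[of _ 0]) auto
qed

lemma ratio_lt_two_k_div_k_minus_one:
  fixes k N :: real
  assumes "1 < k" "0 < N"
  shows "4 * k * N / (2 * (k - 1) * N + 2) < 2 * k / (k - 1)"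
proof -
  have "4 * k * N / (2 * (k - 1) * N + 2) < 4 * k * N / (2 * (k - 1) * N)"
    using assms by (intro divide_strict_left_mono mult_pos_pos add_pos_pos) auto
  also have "\<dots> = 2 * k / (k - 1)"
    using assms by (simp add: field_simps)
  finally show ?thesis .
qed

theorem theorem2p8:
  fixes k :: nat and V :: "'v set" and E :: "'e set" and ends :: "'e \<Rightarrow> 'v \<times> 'v"
    and sigma :: "'e \<Rightarrow> bool" and beta :: "'v \<Rightarrow> int"
  assumes "k \<ge> 2"
    and "loopless_graph V E ends"
    and "pc_boundary (2 * k) V (double_edges E) (double_ends ends) beta"
    and "\<forall>v\<in>V. beta v mod (4 * int k) = (2 * int k * int (pos_degree E ends sigma v)) mod (4 * int k)"
    and "\<exists>D. strongly_connected_orientation V (double_edges E) (double_ends ends) D \<and>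
             beta_orientation (4 * k) V (double_edges E) (double_ends ends) beta D"
  shows "circular_flow_index V E ends sigma < 2 * real k / (real k - 1)"
proof -
  obtain D where SC: "strongly_connected_orientation V (double_edges E) (double_ends ends) D"
    and BO: "beta_orientation (4 * k) V (double_edges E) (double_ends ends) beta D"
    using assms(5) by blast
  obtain N f where "0 < N"
    and "circular_flow (4 * k * N) (2 * (k - 1) * N + 2) V E ends sigma (\<lambda>_. True) f"
    using beta_orientation_circular_flow[OF _ assms(2,4) SC BO] assms(1) by auto
  then have "circular_flow_index V E ends sigma \<le> real (4 * k * N) / real (2 * (k - 1) * N + 2)"
    using assms(1) by (intro circular_flow_index_le) auto
  also have "\<dots> = 4 * real k * real N / (2 * (real k - 1) * real N + 2)"
    using assms(1) by (simp add: of_nat_diff)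
  also have "\<dots> < 2 * real k / (real k - 1)"
    using \<open>0 < N\<close> assms(1) by (intro ratio_lt_two_k_div_k_minus_one) auto
  finally show ?thesis .
qed

end
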